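(* Call a real sequence $A$ over $\mathbb{Z}^2$ a counterexample if $|A|=3.99$, every multiplicity is $\le\frac12$, every line in $\mathbb{R}^2$ contains at most $\frac32$ points of $A$, and $\Sigma^1_{\mathbb{R}}(A)$ contains no lattice point of $\mathbb{Z}^2$ in its interior. If a counterexample exists, then there exists a counterexample $A$ with the following property: whenever $v_1,v_2,v_3,v$ are distinct lattice points with $\mu(v_1),\mu(v_2),\mu(v_3)>0$ and $v$ lies in the interior or on the boundary of the triangle with vertices $v_1,v_2,v_3$, then either $\mu(v)=\frac12$, or $v$ lies on a line $\ell$ containing exactly $\frac32$ points of $A$; moreover, if $v$ lies on the boundary of the triangle, such a line $\ell$ is not the line supporting the side of the triangle containing $v$.
   Context: A real sequence $A$ over $\mathbb{Z}^2$ is a family of pairs $(a_i,\mu_i)$ of distinct points $a_i\in\mathbb{Z}^2$ and non-negative reals $\mu_i$ (multiplicities; $\mu(v)$ is the multiplicity of $v$, $0$ if $v$ does not occur); $|A|=\sum_i\mu_i$. A set $X$ contains $\sum_{i:a_i\in X}\mu_i$ points of $A$. $\Sigma^1_{\mathbb{R}}(A)=\{\sum_i t_ia_i : t_i\in[0,\mu_i],\ \sum_i t_i=1\}$. *)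

theory Defs
  imports "HOL-Analysis.Analysis"
begin

text \<open>A real sequence over Z^2 is represented by its multiplicity function
  mu :: int*int => real (nonnegative, finitely supported). Points of R^2 are
  elements of real*real.\<close>

type_synonym rseq = "int \<times> int \<Rightarrow> real"

definition emb :: "int \<times> int \<Rightarrow> real \<times> real" where
  "emb v = (real_of_int (fst v), real_of_int (snd v))"

definition supp :: "rseq \<Rightarrow> (int \<times> int) set" where
  "supp mu = {v. mu v \<noteq> 0}"

definition real_seq :: "rseq \<Rightarrow> bool" where
  "real_seq mu \<longleftrightarrow> (\<forall>v. 0 \<le> mu v) \<and> finite (supp mu)"

definition total :: "rseq \<Rightarrow> real" where
  "total mu = (\<Sum>v\<in>supp mu. mu v)"

definition pts_in :: "rseq \<Rightarrow> (real \<times> real) set \<Rightarrow> real" where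
  "pts_in mu X = (\<Sum>v\<in>{v\<in>supp mu. emb v \<in> X}. mu v)"

definition is_line :: "(real \<times> real) set \<Rightarrow> bool" where
  "is_line L \<longleftrightarrow> (\<exists>p d. d \<noteq> 0 \<and> L = {p + t *\<^sub>R d | t. True})"

definition Sigma1R :: "rseq \<Rightarrow> (real \<times> real) set" where
  "Sigma1R mu = {(\<Sum>v\<in>supp mu. t v *\<^sub>R emb v) | t.
      (\<forall>v\<in>supp mu. 0 \<le> t v \<and> t v \<le> mu v) \<and> (\<Sum>v\<in>supp mu. t v) = 1}"

definition counterexample :: "rseq \<Rightarrow> bool" where
  "counterexample mu \<longleftrightarrow> real_seq mu \<and> total mu = 3.99 \<and>
     (\<forall>v. mu v \<le> 1/2) \<and>
     (\<forall>L. is_line L \<longrightarrow> pts_in mu L \<le> 3/2) \<and>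
     (\<forall>w. emb w \<notin> interior (Sigma1R mu))"

end

theory Submission
  imports Defs
begin

text \<open>Fix a counterexample A0 and let S be the finite set of lattice points in the convex hull of
  its support. Among the sequences on S with multiplicities in [0, 1/2], total 3.99, at most 3/2
  points on every line and Sigma1R contained in Sigma1R A0, take one minimising the second moment
  (the sum of mu u * norm (emb u)^2); it exists by compactness and is again a counterexample.
  If the property failed at v1, v2, v3, v, move a small mass, split according to the barycentric
  coordinates of v, from v1, v2, v3 to v. Sigma1R can only shrink, the lines through v with
  3/2 points are sides through two of the v_i and lose as much as they gain, and by strict
  convexity of the squared norm the second moment drops: a contradiction.\<close>

lemma continuous_on_coordinate [continuous_intros]:
  "continuous_on A (\<lambda>f::'a \<Rightarrow> 'b::topological_space. f i)"
  by (rule continuous_on_subset[OF continuous_on_product_coordinates]) simp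

lemma compact_pointwise:
  fixes K :: "'a \<Rightarrow> 'b::topological_space set"
  assumes "\<And>i. compact (K i)"
  shows "compact {f. \<forall>i. f i \<in> K i}"
proof -
  have "compactin (product_topology (\<lambda>i. euclidean) UNIV) (Pi\<^sub>E UNIV K)"
    using assms by (subst compactin_PiE) auto
  moreover have "Pi\<^sub>E UNIV K = {f. \<forall>i. f i \<in> K i}"
    by (simp add: PiE_UNIV_domain Pi_def)
  ultimately show ?thesis
    by (simp add: euclidean_product_topology)
qed

lemma inj_emb: "inj emb"
  by (rule injI) (auto simp: emb_def prod_eq_iff)

lemma finite_lattice_points_bounded:
  assumes "bounded X"
  shows "finite {w. emb w \<in> X}"
proof -
  obtain B where B: "\<And>x. x \<in> X \<Longrightarrow> norm x \<le> B"
    using assms by (auto simp: bounded_iff)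
  have "{w. emb w \<in> X} \<subseteq> {-\<lceil>B\<rceil>..\<lceil>B\<rceil>} \<times> {-\<lceil>B\<rceil>..\<lceil>B\<rceil>}"
  proof safe
    fix a b assume "emb (a, b) \<in> X"
    then have "norm (real_of_int a, real_of_int b) \<le> B"
      by (auto dest: B simp: emb_def)
    then have "\<bar>real_of_int a\<bar> \<le> B" "\<bar>real_of_int b\<bar> \<le> B"
      using norm_fst_le[of "real_of_int a" "real_of_int b"] norm_snd_le[of "real_of_int b" "real_of_int a"]
      by auto
    then show "a \<in> {-\<lceil>B\<rceil>..\<lceil>B\<rceil>}" "b \<in> {-\<lceil>B\<rceil>..\<lceil>B\<rceil>}"
      by (auto simp: abs_le_iff) linarith+
  qed
  then show ?thesis
    by (rule finite_subset) simp
qed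

lemma total_eq_sum:
  assumes "finite S" "supp mu \<subseteq> S"
  shows "total mu = (\<Sum>u\<in>S. mu u)"
  unfolding total_def using assms
  by (intro sum.mono_neutral_left) (auto simp: supp_def)

lemma pts_in_eq_sum:
  assumes "finite S" "supp mu \<subseteq> S"
  shows "pts_in mu X = (\<Sum>u\<in>{u\<in>S. emb u \<in> X}. mu u)"
  unfolding pts_in_def using assms
  by (intro sum.mono_neutral_left) (auto simp: supp_def)

lemma Sigma1R_eq_sum_over:
  assumes S: "finite S" "supp mu \<subseteq> S"
  shows "Sigma1R mu = {(\<Sum>u\<in>S. t u *\<^sub>R emb u) | t.
      (\<forall>u\<in>S. 0 \<le> t u \<and> t u \<le> mu u) \<and> (\<Sum>u\<in>S. t u) = 1}"
proof (intro equalityI subsetI)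
  fix p assume "p \<in> Sigma1R mu"
  then obtain t where t: "p = (\<Sum>u\<in>supp mu. t u *\<^sub>R emb u)"
      "\<forall>u\<in>supp mu. 0 \<le> t u \<and> t u \<le> mu u" "(\<Sum>u\<in>supp mu. t u) = 1"
    unfolding Sigma1R_def by auto
  define t' where "t' u = (if u \<in> supp mu then t u else 0)" for u
  have "(\<Sum>u\<in>S. t' u *\<^sub>R emb u) = p"
    unfolding t(1) by (rule sum.mono_neutral_cong_right[OF S]) (simp_all add: t'_def)
  moreover have "(\<Sum>u\<in>S. t' u) = 1"
    unfolding t(3)[symmetric] by (rule sum.mono_neutral_cong_right[OF S]) (simp_all add: t'_def)
  moreover have "\<forall>u\<in>S. 0 \<le> t' u \<and> t' u \<le> mu u"
    using t(2) by (auto simp: t'_def supp_def)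
  ultimately show "p \<in> {(\<Sum>u\<in>S. t u *\<^sub>R emb u) | t.
      (\<forall>u\<in>S. 0 \<le> t u \<and> t u \<le> mu u) \<and> (\<Sum>u\<in>S. t u) = 1}"
    by blast
next
  fix p assume "p \<in> {(\<Sum>u\<in>S. t u *\<^sub>R emb u) | t.
      (\<forall>u\<in>S. 0 \<le> t u \<and> t u \<le> mu u) \<and> (\<Sum>u\<in>S. t u) = 1}"
  then obtain t where t: "p = (\<Sum>u\<in>S. t u *\<^sub>R emb u)" "\<forall>u\<in>S. 0 \<le> t u \<and> t u \<le> mu u"
      "(\<Sum>u\<in>S. t u) = 1"
    by auto
  have vanish: "\<forall>u\<in>S - supp mu. t u = 0"
    using t(2) by (force simp: supp_def)
  have "p = (\<Sum>u\<in>supp mu. t u *\<^sub>R emb u)" "(\<Sum>u\<in>supp mu. t u) = 1"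
    unfolding t(1) t(3)[symmetric] using S vanish
    by (simp_all add: sum.mono_neutral_right)
  with t(2) S(2) show "p \<in> Sigma1R mu"
    unfolding Sigma1R_def by blast
qed

lemma closed_Sigma1R:
  assumes "real_seq mu"
  shows "closed (Sigma1R mu)"
proof -
  let ?F = "supp mu"
  have F: "finite ?F"
    using assms by (simp add: real_seq_def)
  let ?T = "{t. \<forall>u. t u \<in> (if u \<in> ?F then {0..mu u} else {0})} \<inter> {t. (\<Sum>u\<in>?F. t u) = 1}"
  let ?p = "\<lambda>t. \<Sum>u\<in>?F. t u *\<^sub>R emb u"
  have "compact (?p ` ?T)"
    by (intro compact_continuous_image compact_Int_closed compact_pointwise closed_Collect_eq
        continuous_intros) auto
  moreover have "?p ` ?T = Sigma1R mu"
    unfolding Sigma1R_eq_sum_over[OF F order_refl]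
  proof (intro equalityI subsetI)
    fix p assume "p \<in> ?p ` ?T"
    then obtain t where t: "\<forall>u. t u \<in> (if u \<in> ?F then {0..mu u} else {0})"
        "(\<Sum>u\<in>?F. t u) = 1" "p = ?p t"
      by auto
    have "\<forall>u\<in>?F. 0 \<le> t u \<and> t u \<le> mu u"
      using t(1) by (metis atLeastAtMost_iff)
    with t(2,3) show "p \<in> {?p t | t. (\<forall>u\<in>?F. 0 \<le> t u \<and> t u \<le> mu u) \<and> (\<Sum>u\<in>?F. t u) = 1}"
      by blast
  next
    fix p assume "p \<in> {?p t | t. (\<forall>u\<in>?F. 0 \<le> t u \<and> t u \<le> mu u) \<and> (\<Sum>u\<in>?F. t u) = 1}"
    then obtain t where t: "p = ?p t" "\<forall>u\<in>?F. 0 \<le> t u \<and> t u \<le> mu u" "(\<Sum>u\<in>?F. t u) = 1"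
      by blast
    define t' where "t' u = (if u \<in> ?F then t u else 0)" for u
    have "t' \<in> ?T"
      using t by (simp add: t'_def)
    moreover have "p = ?p t'"
      unfolding t(1) by (rule sum.cong) (simp_all add: t'_def)
    ultimately show "p \<in> ?p ` ?T"
      by blast
  qed
  ultimately show ?thesis
    by (metis compact_imp_closed)
qed

lemma Sigma1R_strict_weights_near:
  assumes S: "finite S" "supp mu \<subseteq> S" and nonneg: "\<And>u. 0 \<le> mu u"
    and total: "1 < (\<Sum>u\<in>S. mu u)" and p: "p \<in> Sigma1R mu" "open U" "p \<in> U"
  obtains w where "(\<Sum>u\<in>S. w u *\<^sub>R emb u) \<in> U" "(\<Sum>u\<in>S. w u) = 1"
    "\<And>u. u \<in> S \<Longrightarrow> 0 \<le> w u" "\<And>u. u \<in> S \<Longrightarrow> 0 < w u \<Longrightarrow> w u < mu u"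
proof -
  let ?s = "\<Sum>u\<in>S. mu u"
  obtain t where t: "p = (\<Sum>u\<in>S. t u *\<^sub>R emb u)" "\<forall>u\<in>S. 0 \<le> t u \<and> t u \<le> mu u"
      "(\<Sum>u\<in>S. t u) = 1"
    using p(1) unfolding Sigma1R_eq_sum_over[OF S] by blast
  define q where "q = (\<Sum>u\<in>S. (mu u / ?s) *\<^sub>R emb u)"
  have "((\<lambda>d. (1 - d) *\<^sub>R p + d *\<^sub>R q) \<longlongrightarrow> p) (at_right 0)"
    by (auto intro!: tendsto_eq_intros)
  then have "eventually (\<lambda>d. (1 - d) *\<^sub>R p + d *\<^sub>R q \<in> U) (at_right 0)"
    using p(2,3) by (rule topological_tendstoD)
  moreover have "eventually (\<lambda>d. 0 < d \<and> d < (1::real)) (at_right 0)"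
    unfolding eventually_at_right_field by (auto intro: exI[of _ 1])
  ultimately obtain d where d: "0 < d" "d < 1" "(1 - d) *\<^sub>R p + d *\<^sub>R q \<in> U"
    using eventually_happens'[OF trivial_limit_at_right_real] eventually_conj by blast
  \<comment> \<open>Pulling p towards the centroid q makes every positive weight strictly smaller than its
    bound, because q uses only the fraction 1/s < 1 of each multiplicity (s the total mass).\<close>
  define w where "w u = (1 - d) * t u + d * (mu u / ?s)" for u
  show thesis
  proof
    show "(\<Sum>u\<in>S. w u *\<^sub>R emb u) \<in> U"
      using d(3) by (simp add: w_def t(1) q_def scaleR_sum_right sum.distrib scaleR_add_left)
    show "(\<Sum>u\<in>S. w u) = 1"
      using total by (simp add: w_def sum.distrib t(3) flip: sum_distrib_left sum_divide_distrib)
    show "0 \<le> w u" if "u \<in> S" for u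
      unfolding w_def using t(2) that d nonneg[of u] total
      by (intro add_nonneg_nonneg mult_nonneg_nonneg divide_nonneg_nonneg) auto
    show "w u < mu u" if "u \<in> S" "0 < w u" for u
    proof -
      have "mu u \<noteq> 0"
        using t(2) that by (force simp: w_def)
      then have "d * (mu u / ?s) < d * mu u"
        using d total nonneg[of u] by (intro mult_strict_left_mono) (auto simp: divide_less_eq)
      moreover have "(1 - d) * t u \<le> (1 - d) * mu u"
        using t(2) that d by (intro mult_left_mono) auto
      ultimately show ?thesis
        by (simp add: w_def algebra_simps)
    qed
  qed
qed

lemma Sigma1R_meets_open_nearby:
  assumes S: "finite S" "supp mu \<subseteq> S" and nonneg: "\<And>u. 0 \<le> mu u"
    and total: "1 < (\<Sum>u\<in>S. mu u)" and p: "p \<in> Sigma1R mu" "open U" "p \<in> U"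
  obtains T where "open T" "mu \<in> T"
    "\<And>m. m \<in> T \<Longrightarrow> \<forall>u. 0 \<le> m u \<Longrightarrow> supp m \<subseteq> S \<Longrightarrow> Sigma1R m \<inter> U \<noteq> {}"
proof -
  obtain w where w: "(\<Sum>u\<in>S. w u *\<^sub>R emb u) \<in> U" "(\<Sum>u\<in>S. w u) = 1"
      "\<And>u. u \<in> S \<Longrightarrow> 0 \<le> w u" "\<And>u. u \<in> S \<Longrightarrow> 0 < w u \<Longrightarrow> w u < mu u"
    using Sigma1R_strict_weights_near[OF assms] by blast
  define T where "T = (\<Inter>u\<in>{u\<in>S. 0 < w u}. {m. w u < m u})"
  show thesis
  proof
    show "open T"
      unfolding T_def using S(1) by (intro open_INT ballI open_Collect_less continuous_intros) auto
    show "mu \<in> T"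
      using w(4) by (auto simp: T_def)
  next
    fix m assume m: "m \<in> T" "\<forall>u. 0 \<le> m u" "supp m \<subseteq> S"
    have "\<forall>u\<in>S. 0 \<le> w u \<and> w u \<le> m u"
    proof
      fix u assume u: "u \<in> S"
      have "w u \<le> m u"
      proof (cases "0 < w u")
        case True
        then have "m \<in> {m. w u < m u}"
          using m(1) u unfolding T_def by blast
        then show ?thesis
          by simp
      next
        case False
        then show ?thesis
          using m(2)[rule_format, of u] by simp
      qed
      with w(3)[OF u] show "0 \<le> w u \<and> w u \<le> m u"
        by simp
    qed
    then have "(\<Sum>u\<in>S. w u *\<^sub>R emb u) \<in> Sigma1R m"
      unfolding Sigma1R_eq_sum_over[OF S(1) m(3)] using w(2) by blast
    with w(1) show "Sigma1R m \<inter> U \<noteq> {}"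
      by blast
  qed
qed

lemma closed_Sigma1R_subset:
  assumes "finite S" "closed C" "1 < s"
  shows "closed {mu. (\<forall>u. 0 \<le> mu u) \<and> supp mu \<subseteq> S \<and> (\<Sum>u\<in>S. mu u) = s \<and> Sigma1R mu \<subseteq> C}"
proof -
  define N where "N = {mu. (\<forall>u. 0 \<le> mu u) \<and> supp mu \<subseteq> S \<and> (\<Sum>u\<in>S. mu u) = s}"
  have "N = {mu. \<forall>u. 0 \<le> mu u} \<inter> {mu. \<forall>u. u \<notin> S \<longrightarrow> mu u = 0} \<inter> {mu. (\<Sum>u\<in>S. mu u) = s}"
    by (auto simp: N_def supp_def)
  then have "closed N"
    by (simp only:) (intro closed_Int closed_Collect_all closed_Collect_imp closed_Collect_le
        closed_Collect_eq open_Collect_const continuous_intros)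
  have "open (- {mu \<in> N. Sigma1R mu \<subseteq> C})"
  proof (subst open_subopen, intro ballI)
    fix mu assume mu: "mu \<in> - {mu \<in> N. Sigma1R mu \<subseteq> C}"
    show "\<exists>T. open T \<and> mu \<in> T \<and> T \<subseteq> - {mu \<in> N. Sigma1R mu \<subseteq> C}"
    proof (cases "mu \<in> N")
      case False
      then show ?thesis
        using \<open>closed N\<close> by (intro exI[of _ "- N"]) auto
    next
      case True
      then obtain p where p: "p \<in> Sigma1R mu" "p \<in> - C"
        using mu by auto
      have mu_N: "supp mu \<subseteq> S" "\<And>u. 0 \<le> mu u" "1 < (\<Sum>u\<in>S. mu u)"
        using True assms(3) by (auto simp: N_def)
      obtain T where T: "open T" "mu \<in> T" and meets:
        "\<And>m. m \<in> T \<Longrightarrow> \<forall>u. 0 \<le> m u \<Longrightarrow> supp m \<subseteq> S \<Longrightarrow> Sigma1R m \<inter> - C \<noteq> {}"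
        using Sigma1R_meets_open_nearby[OF assms(1) mu_N p(1) _ p(2)] assms(2) by auto
      have "T \<subseteq> - {mu \<in> N. Sigma1R mu \<subseteq> C}"
      proof
        fix m assume "m \<in> T"
        show "m \<in> - {mu \<in> N. Sigma1R mu \<subseteq> C}"
        proof
          assume "m \<in> {mu \<in> N. Sigma1R mu \<subseteq> C}"
          then have "\<forall>u. 0 \<le> m u" "supp m \<subseteq> S" "Sigma1R m \<subseteq> C"
            by (auto simp: N_def)
          with meets[OF \<open>m \<in> T\<close>] show False
            by blast
        qed
      qed
      with T show ?thesis
        by blast
    qed
  qed
  then show ?thesis
    by (simp add: closed_def N_def conj_assoc)
qed

text \<open>The counterexample conditions on a fixed finite carrier S, except that the interior
  condition is replaced by the closed condition Sigma1R mu \<subseteq> C.\<close>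

definition admissible :: "(int \<times> int) set \<Rightarrow> (real \<times> real) set \<Rightarrow> rseq \<Rightarrow> bool" where
  "admissible S C mu \<longleftrightarrow> (\<forall>u. 0 \<le> mu u \<and> mu u \<le> 1/2) \<and> supp mu \<subseteq> S \<and>
     (\<Sum>u\<in>S. mu u) = 3.99 \<and> Sigma1R mu \<subseteq> C \<and>
     (\<forall>L. is_line L \<longrightarrow> (\<Sum>u\<in>{u\<in>S. emb u \<in> L}. mu u) \<le> 3/2)"

lemma compact_admissible:
  assumes "finite S" "closed C"
  shows "compact {mu. admissible S C mu}"
proof -
  have "{mu. admissible S C mu} = {mu. \<forall>u. mu u \<in> {0..1/2}} \<inter>
      {mu. (\<forall>u. 0 \<le> mu u) \<and> supp mu \<subseteq> S \<and> (\<Sum>u\<in>S. mu u) = 3.99 \<and> Sigma1R mu \<subseteq> C} \<inter>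
      {mu. \<forall>L. is_line L \<longrightarrow> (\<Sum>u\<in>{u\<in>S. emb u \<in> L}. mu u) \<le> 3/2}"
    by (auto simp: admissible_def)
  also have "compact \<dots>"
    using assms by (intro compact_Int_closed compact_pointwise closed_Sigma1R_subset closed_Collect_all
        closed_Collect_imp open_Collect_const closed_Collect_le continuous_intros) auto
  finally show ?thesis .
qed

lemma admissible_if_counterexample:
  assumes "counterexample A" "finite S" "supp A \<subseteq> S"
  shows "admissible S (Sigma1R A) A"
  using assms total_eq_sum[OF assms(2,3)] pts_in_eq_sum[OF assms(2,3)]
  by (auto simp: admissible_def counterexample_def real_seq_def)

lemma counterexample_if_admissible:
  assumes "admissible S C mu" "finite S" "\<forall>w. emb w \<notin> interior C"
  shows "counterexample mu"
proof -
  have "supp mu \<subseteq> S" "Sigma1R mu \<subseteq> C"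
    using assms(1) by (auto simp: admissible_def)
  then show ?thesis
    using assms finite_subset[of "supp mu" S] interior_mono[of "Sigma1R mu" C]
      total_eq_sum[of S mu] pts_in_eq_sum[of S mu]
    by (auto simp: admissible_def counterexample_def real_seq_def)
qed

definition barycentric_weights :: "(int \<times> int) set \<Rightarrow> rseq \<Rightarrow> int \<times> int \<Rightarrow> bool" where
  "barycentric_weights V lam v \<longleftrightarrow> (\<forall>u. 0 \<le> lam u) \<and> supp lam \<subseteq> V \<and>
     (\<Sum>u\<in>V. lam u) = 1 \<and> (\<Sum>u\<in>V. lam u *\<^sub>R emb u) = emb v"

lemma barycentric_weights_if_convex_hull:
  assumes "finite V" "emb v \<in> convex hull (emb ` V)"
  obtains lam where "barycentric_weights V lam v"
proof -
  obtain c where c: "\<forall>x\<in>emb ` V. 0 \<le> c x" "(\<Sum>x\<in>emb ` V. c x) = 1"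
      "(\<Sum>x\<in>emb ` V. c x *\<^sub>R x) = emb v"
    using assms by (auto simp: convex_hull_finite)
  have inj: "inj_on emb V"
    using inj_emb by (rule inj_on_subset) simp
  define lam where "lam u = (if u \<in> V then c (emb u) else 0)" for u
  have "barycentric_weights V lam v"
    using c by (auto simp: barycentric_weights_def lam_def supp_def sum.reindex[OF inj])
  then show thesis ..
qed

lemma barycentric_weights_mono:
  assumes "barycentric_weights V lam v" "V \<subseteq> S" "finite S"
  shows "barycentric_weights S lam v"
proof -
  have "\<forall>u\<in>S - V. lam u = 0"
    using assms(1) by (auto simp: barycentric_weights_def supp_def)
  then show ?thesis
    using assms by (auto simp: barycentric_weights_def sum.mono_neutral_right)
qed

lemma barycentric_weights_le_one:
  assumes "barycentric_weights S lam v" "finite S"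
  shows "lam u \<le> 1"
proof (cases "u \<in> S")
  case True
  have nonneg: "0 \<le> lam x" for x
    using assms(1) unfolding barycentric_weights_def by blast
  have "lam u \<le> (\<Sum>x\<in>S. lam x)"
    using nonneg assms(2) by (intro member_le_sum[OF True])
  then show ?thesis
    using assms(1) by (simp add: barycentric_weights_def)
next
  case False
  then have "lam u = 0"
    using assms(1) by (auto simp: barycentric_weights_def supp_def)
  then show ?thesis
    by simp
qed

definition transfer :: "rseq \<Rightarrow> real \<Rightarrow> rseq \<Rightarrow> int \<times> int \<Rightarrow> rseq" where
  "transfer mu e lam v = (\<lambda>u. mu u - e * lam u + (if u = v then e else 0))"

lemma sum_transfer:
  fixes g :: "int \<times> int \<Rightarrow> 'a::real_vector"
  assumes "finite F"
  shows "(\<Sum>u\<in>F. transfer mu e lam v u *\<^sub>R g u) =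
    (\<Sum>u\<in>F. mu u *\<^sub>R g u) - e *\<^sub>R (\<Sum>u\<in>F. lam u *\<^sub>R g u) + (if v \<in> F then e *\<^sub>R g v else 0)"
  using assms
  by (simp add: transfer_def scaleR_add_left scaleR_diff_left sum.distrib sum_subtractf
      scaleR_sum_right if_distrib[of "\<lambda>x. x *\<^sub>R _"] sum.delta cong: if_cong)

lemma supp_transfer: "supp (transfer mu e lam v) \<subseteq> supp mu \<union> supp lam \<union> {v}"
  by (auto simp: supp_def transfer_def)

lemma Sigma1R_transfer_subset:
  assumes F: "finite F" "supp mu \<subseteq> F" and nonneg: "\<And>u. 0 \<le> mu u"
    and lam: "barycentric_weights F lam v" "lam v = 0" and v: "v \<in> F" and e: "0 \<le> e"
  shows "Sigma1R (transfer mu e lam v) \<subseteq> Sigma1R mu"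
proof
  have lam_nonneg: "\<And>u. 0 \<le> lam u" and lam_supp: "supp lam \<subseteq> F"
    and lam_sums: "(\<Sum>u\<in>F. lam u) = 1" "(\<Sum>u\<in>F. lam u *\<^sub>R emb u) = emb v"
    using lam(1) by (auto simp: barycentric_weights_def)
  fix p assume "p \<in> Sigma1R (transfer mu e lam v)"
  moreover have "supp (transfer mu e lam v) \<subseteq> F"
    using supp_transfer[of mu e lam v] F(2) lam_supp v by blast
  ultimately obtain t where t: "p = (\<Sum>u\<in>F. t u *\<^sub>R emb u)"
      "\<forall>u\<in>F. 0 \<le> t u \<and> t u \<le> transfer mu e lam v u" "(\<Sum>u\<in>F. t u) = 1"
    using Sigma1R_eq_sum_over[OF F(1)] by blast
  \<comment> \<open>The weight by which t exceeds mu at v is handed back to the points carrying lam, whose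
    barycentre is v, so the represented point does not move.\<close>
  define r where "r = max 0 (t v - mu v)"
  have r: "0 \<le> r" "r \<le> e"
    using t(2) v lam(2) e by (auto simp: r_def transfer_def)
  define t' where "t' = transfer t (- r) lam v"
  have "(\<Sum>u\<in>F. t' u) = 1"
    using sum_transfer[OF F(1), of t "- r" lam v "\<lambda>_. 1::real"] t(3) lam_sums v by (simp add: t'_def)
  moreover have "(\<Sum>u\<in>F. t' u *\<^sub>R emb u) = p"
    using sum_transfer[OF F(1), of t "- r" lam v emb] t(1) lam_sums v by (simp add: t'_def)
  moreover have "\<forall>u\<in>F. 0 \<le> t' u \<and> t' u \<le> mu u"
  proof
    fix u assume u: "u \<in> F"
    show "0 \<le> t' u \<and> t' u \<le> mu u"
    proof (cases "u = v")
      case True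
      then show ?thesis
        using lam(2) nonneg[of v] t(2) v by (auto simp: t'_def transfer_def r_def)
    next
      case False
      have "r * lam u \<le> e * lam u"
        using r lam_nonneg[of u] by (intro mult_right_mono)
      then show ?thesis
        using False t(2) u r lam_nonneg[of u] by (auto simp: t'_def transfer_def)
    qed
  qed
  ultimately show "p \<in> Sigma1R mu"
    unfolding Sigma1R_eq_sum_over[OF F] by blast
qed

lemma admissible_transfer:
  assumes S: "finite S" and adm: "admissible S C mu"
    and lam: "barycentric_weights S lam v" "lam v = 0" and v: "v \<in> S"
    and e: "0 \<le> e" "mu v + e \<le> 1/2" "\<And>u. e * lam u \<le> mu u"
    and lines: "\<And>L. is_line L \<Longrightarrow> emb v \<in> L \<Longrightarrow>
      (\<Sum>u\<in>{u\<in>S. emb u \<in> L}. mu u) + e \<le> 3/2 \<or> (\<Sum>u\<in>{u\<in>S. emb u \<in> L}. lam u) = 1"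
  shows "admissible S C (transfer mu e lam v)"
proof -
  let ?mu' = "transfer mu e lam v"
  have mu: "\<And>u. 0 \<le> mu u" "\<And>u. mu u \<le> 1/2" "supp mu \<subseteq> S" "(\<Sum>u\<in>S. mu u) = 3.99"
      "Sigma1R mu \<subseteq> C" "\<And>L. is_line L \<Longrightarrow> (\<Sum>u\<in>{u\<in>S. emb u \<in> L}. mu u) \<le> 3/2"
    using adm by (auto simp: admissible_def)
  have lam_nonneg: "\<And>u. 0 \<le> lam u" and lam_supp: "supp lam \<subseteq> S" and lam_sum: "(\<Sum>u\<in>S. lam u) = 1"
    using lam(1) by (auto simp: barycentric_weights_def)
  have "0 \<le> ?mu' u \<and> ?mu' u \<le> 1/2" for u
    using mu(1,2)[of u] e mult_nonneg_nonneg[OF e(1) lam_nonneg[of u]] lam(2)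
    by (auto simp: transfer_def)
  moreover have "supp ?mu' \<subseteq> S"
    using supp_transfer[of mu e lam v] mu(3) lam_supp v by blast
  moreover have "(\<Sum>u\<in>S. ?mu' u) = 3.99"
    using sum_transfer[OF S, of mu e lam v "\<lambda>_. 1::real"] mu(4) lam_sum v by simp
  moreover have "Sigma1R ?mu' \<subseteq> C"
    using Sigma1R_transfer_subset[OF S mu(3) mu(1) lam v e(1)] mu(5) by blast
  moreover have "(\<Sum>u\<in>{u\<in>S. emb u \<in> L}. ?mu' u) \<le> 3/2" if L: "is_line L" for L
  proof -
    let ?SL = "{u\<in>S. emb u \<in> L}"
    have "(\<Sum>u\<in>?SL. ?mu' u) =
        (\<Sum>u\<in>?SL. mu u) - e * (\<Sum>u\<in>?SL. lam u) + (if emb v \<in> L then e else 0)"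
      using sum_transfer[of ?SL mu e lam v "\<lambda>_. 1::real"] S v by simp
    moreover have "0 \<le> e * (\<Sum>u\<in>?SL. lam u)"
      using e(1) lam_nonneg by (simp add: sum_nonneg)
    ultimately show ?thesis
      using mu(6)[OF L] lines[OF L] by (cases "emb v \<in> L") auto
  qed
  ultimately show ?thesis
    by (simp add: admissible_def)
qed

lemma uniform_slack:
  fixes f :: "'a \<Rightarrow> real"
  assumes "finite X"
  obtains g where "0 < g" "\<And>x. x \<in> X \<Longrightarrow> f x < c \<Longrightarrow> f x + g \<le> c"
proof
  let ?D = "insert 1 ((\<lambda>x. c - f x) ` {x\<in>X. f x < c})"
  show "0 < Min ?D"
    using assms by (auto simp: Min_gr_iff)
  show "f x + Min ?D \<le> c" if "x \<in> X" "f x < c" for x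
  proof -
    have "Min ?D \<le> c - f x"
      using that assms by (intro Min_le) auto
    then show ?thesis
      by simp
  qed
qed

lemma transfer_step_admissible:
  assumes S: "finite S" and adm: "admissible S C mu"
    and lam: "barycentric_weights S lam v" "lam v = 0" and v: "v \<in> S" "mu v < 1/2"
    and lam_pos: "\<And>u. lam u \<noteq> 0 \<Longrightarrow> 0 < mu u"
    and lines: "\<And>L. is_line L \<Longrightarrow> emb v \<in> L \<Longrightarrow> (\<Sum>u\<in>{u\<in>S. emb u \<in> L}. mu u) = 3/2 \<Longrightarrow>
      (\<Sum>u\<in>{u\<in>S. emb u \<in> L}. lam u) = 1"
  obtains e where "0 < e" "admissible S C (transfer mu e lam v)"
proof -
  have mu: "\<And>u. 0 \<le> mu u" "\<And>L. is_line L \<Longrightarrow> (\<Sum>u\<in>{u\<in>S. emb u \<in> L}. mu u) \<le> 3/2"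
    using adm by (auto simp: admissible_def)
  have lam_nonneg: "\<And>u. 0 \<le> lam u" and lam_supp: "supp lam \<subseteq> S"
    using lam(1) by (auto simp: barycentric_weights_def)
  obtain g where g: "0 < g" "\<And>T. T \<in> Pow S \<Longrightarrow> sum mu T < 3/2 \<Longrightarrow> sum mu T + g \<le> 3/2"
    using uniform_slack[of "Pow S" "sum mu" "3/2"] S by blast
  define E where "E = insert g (insert (1/2 - mu v) (mu ` supp lam))"
  have E: "finite E" "E \<noteq> {}"
    using finite_subset[OF lam_supp S] by (auto simp: E_def)
  define e where "e = Min E"
  have e_pos: "0 < e"
    using E g(1) v(2) lam_pos by (auto simp: e_def E_def Min_gr_iff supp_def)
  have "e \<le> x" if "x \<in> E" for x
    using E(1) that unfolding e_def by (rule Min_le)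
  then have e_le: "e \<le> g" "e \<le> 1/2 - mu v" "\<And>u. lam u \<noteq> 0 \<Longrightarrow> e \<le> mu u"
    by (auto simp: E_def supp_def)
  have lam_bound: "e * lam u \<le> mu u" for u
  proof (cases "lam u = 0")
    case False
    have "e * lam u \<le> e"
      using e_pos barycentric_weights_le_one[OF lam(1) S, of u] lam_nonneg[of u]
      by (simp add: mult_left_le)
    with e_le(3)[OF False] show ?thesis
      by simp
  qed (simp add: mu(1))
  have line_bound: "(\<Sum>u\<in>{u\<in>S. emb u \<in> L}. mu u) + e \<le> 3/2 \<or> (\<Sum>u\<in>{u\<in>S. emb u \<in> L}. lam u) = 1"
    if L: "is_line L" "emb v \<in> L" for L
  proof (cases "(\<Sum>u\<in>{u\<in>S. emb u \<in> L}. mu u) = 3/2")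
    case False
    then have "(\<Sum>u\<in>{u\<in>S. emb u \<in> L}. mu u) < 3/2"
      using mu(2)[OF L(1)] by simp
    then show ?thesis
      using g(2)[of "{u\<in>S. emb u \<in> L}"] e_le(1) by auto
  qed (use lines[OF L] in simp)
  show thesis
    using e_pos e_le(2) lam_bound line_bound
    by (intro that[OF e_pos] admissible_transfer[OF S adm lam v(1)]) auto
qed

lemma sum_norm_power2_barycentre:
  fixes y :: "'i \<Rightarrow> 'a::real_inner"
  assumes "(\<Sum>i\<in>I. l i) = 1" "(\<Sum>i\<in>I. l i *\<^sub>R y i) = x"
  shows "(\<Sum>i\<in>I. l i * (norm (y i))\<^sup>2) = (norm x)\<^sup>2 + (\<Sum>i\<in>I. l i * (norm (y i - x))\<^sup>2)"
proof -
  have "(norm (y i - x))\<^sup>2 = (norm (y i))\<^sup>2 - 2 * inner (y i) x + (norm x)\<^sup>2" for i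
    by (simp add: power2_norm_eq_inner inner_diff_left inner_diff_right inner_commute)
  then have "(\<Sum>i\<in>I. l i * (norm (y i - x))\<^sup>2) =
      (\<Sum>i\<in>I. l i * (norm (y i))\<^sup>2 - 2 * (l i * inner (y i) x) + l i * (norm x)\<^sup>2)"
    by (simp add: right_diff_distrib distrib_left mult.left_commute)
  also have "\<dots> = (\<Sum>i\<in>I. l i * (norm (y i))\<^sup>2) - 2 * inner (\<Sum>i\<in>I. l i *\<^sub>R y i) x
      + (\<Sum>i\<in>I. l i) * (norm x)\<^sup>2"
    by (simp add: sum.distrib sum_subtractf sum_distrib_left sum_distrib_right inner_sum_left)
  finally show ?thesis
    using assms by (simp add: power2_norm_eq_inner)
qed

definition second_moment :: "(int \<times> int) set \<Rightarrow> rseq \<Rightarrow> real" where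
  "second_moment S mu = (\<Sum>u\<in>S. mu u * (norm (emb u))\<^sup>2)"

lemma second_moment_transfer_less:
  assumes S: "finite S" and lam: "barycentric_weights S lam v" "lam v = 0"
    and v: "v \<in> S" and e: "0 < e"
  shows "second_moment S (transfer mu e lam v) < second_moment S mu"
proof -
  have lam_nonneg: "\<And>u. 0 \<le> lam u" and lam_sums: "(\<Sum>u\<in>S. lam u) = 1" "(\<Sum>u\<in>S. lam u *\<^sub>R emb u) = emb v"
    using lam(1) by (auto simp: barycentric_weights_def)
  have "\<exists>u\<in>S. 0 < lam u"
  proof (rule ccontr)
    assume "\<not> ?thesis"
    then have "(\<Sum>u\<in>S. lam u) \<le> 0"
      by (intro sum_nonpos) (simp add: not_less)
    with lam_sums(1) show False
      by simp
  qed
  then obtain u where u: "u \<in> S" "0 < lam u"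
    by blast
  then have "emb u \<noteq> emb v"
    using lam(2) inj_emb by (auto dest: injD)
  then have spread: "0 < (\<Sum>u\<in>S. lam u * (norm (emb u - emb v))\<^sup>2)"
    using u lam_nonneg by (intro sum_pos2[OF S u(1)]) auto
  have "second_moment S (transfer mu e lam v) =
      second_moment S mu - e * (\<Sum>u\<in>S. lam u * (norm (emb u))\<^sup>2) + e * (norm (emb v))\<^sup>2"
    using sum_transfer[OF S, of mu e lam v "\<lambda>u. (norm (emb u))\<^sup>2"] v
    by (simp add: second_moment_def)
  also have "\<dots> = second_moment S mu - e * (\<Sum>u\<in>S. lam u * (norm (emb u - emb v))\<^sup>2)"
    using sum_norm_power2_barycentre[OF lam_sums] by (simp add: distrib_left)
  finally show ?thesis
    using spread e by simp
qed

lemma mem_affine_3_solve: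
  fixes x y z :: "'a::real_vector"
  assumes "affine L" "x \<in> L" "y \<in> L" "a *\<^sub>R x + b *\<^sub>R y + c *\<^sub>R z \<in> L" "a + b + c = 1" "c \<noteq> 0"
  shows "z \<in> L"
proof -
  let ?p = "a *\<^sub>R x + b *\<^sub>R y + c *\<^sub>R z"
  have "1 / c + - a / c + - b / c = 1"
    using assms(5,6) by (simp add: divide_simps)
  then have "(1 / c) *\<^sub>R ?p + (- a / c) *\<^sub>R x + (- b / c) *\<^sub>R y \<in> L"
    by (rule mem_affine_3[OF assms(1,4,2,3)])
  moreover have "(1 / c) *\<^sub>R ?p + (- a / c) *\<^sub>R x + (- b / c) *\<^sub>R y = z"
    using assms(6) by (simp add: scaleR_add_right divide_simps algebra_simps)
  ultimately show ?thesis
    by simp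
qed

lemma barycentric_weights_on_line:
  assumes lam: "barycentric_weights {v1, v2, v3} lam v" and dist: "distinct [v1, v2, v3]"
    and L: "affine L" "emb v \<in> L"
    and ab: "a \<in> {v1, v2, v3}" "b \<in> {v1, v2, v3}" "a \<noteq> b" "emb a \<in> L" "emb b \<in> L"
    and u: "lam u \<noteq> 0"
  shows "emb u \<in> L"
proof -
  have "u \<in> {v1, v2, v3}"
    using lam u by (auto simp: barycentric_weights_def supp_def)
  show ?thesis
  proof (cases "u \<in> {a, b}")
    case False
    with \<open>u \<in> {v1, v2, v3}\<close> have abu: "{v1, v2, v3} = {a, b, u}" "distinct [a, b, u]"
      using dist ab(1-3) by auto
    have "lam a *\<^sub>R emb a + lam b *\<^sub>R emb b + lam u *\<^sub>R emb u \<in> L" "lam a + lam b + lam u = 1"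
      using lam L(2) abu by (auto simp: barycentric_weights_def algebra_simps)
    then show ?thesis
      using mem_affine_3_solve[OF L(1) ab(4,5)] u by blast
  qed (use ab(4,5) in auto)
qed

lemma sum_barycentric_weights_on_side:
  assumes S: "finite S" "{v1, v2, v3} \<subseteq> S"
    and lam: "barycentric_weights {v1, v2, v3} lam v" and dist: "distinct [v1, v2, v3]"
    and ab: "a \<in> {v1, v2, v3}" "b \<in> {v1, v2, v3}" "a \<noteq> b"
    and L: "L = affine hull {emb a, emb b}" "emb v \<in> L"
  shows "(\<Sum>u\<in>{u\<in>S. emb u \<in> L}. lam u) = 1"
proof -
  have "affine L" "emb a \<in> L" "emb b \<in> L"
    unfolding L(1) by (simp_all add: affine_affine_hull hull_inc)
  then have "\<forall>u\<in>S - {u\<in>S. emb u \<in> L}. lam u = 0"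
    using barycentric_weights_on_line[OF lam dist _ L(2) ab] by blast
  then have "(\<Sum>u\<in>{u\<in>S. emb u \<in> L}. lam u) = (\<Sum>u\<in>S. lam u)"
    using S(1) by (intro sum.mono_neutral_left) auto
  then show ?thesis
    using barycentric_weights_mono[OF lam S(2,1)] by (simp add: barycentric_weights_def)
qed

lemma continuous_on_second_moment: "continuous_on A (second_moment S)"
  unfolding second_moment_def[abs_def] by (intro continuous_intros)

lemma exists_minimal_second_moment:
  assumes "finite S" "closed C" "admissible S C A"
  obtains mu where "admissible S C mu"
    "\<And>mu'. admissible S C mu' \<Longrightarrow> second_moment S mu \<le> second_moment S mu'"
proof -
  have "\<exists>mu\<in>{mu. admissible S C mu}. \<forall>mu'\<in>{mu. admissible S C mu}.
      second_moment S mu \<le> second_moment S mu'"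
    using assms by (intro continuous_attains_inf compact_admissible continuous_on_second_moment) auto
  with that show thesis
    by auto
qed

lemma minimal_second_moment_saturated:
  assumes S: "finite S" and carrier: "\<And>w. emb w \<in> convex hull (emb ` S) \<Longrightarrow> w \<in> S"
    and adm: "admissible S C mu"
    and min: "\<And>mu'. admissible S C mu' \<Longrightarrow> second_moment S mu \<le> second_moment S mu'"
    and dist: "distinct [v1, v2, v3, v]" and pos: "0 < mu v1" "0 < mu v2" "0 < mu v3"
    and hull: "emb v \<in> convex hull {emb v1, emb v2, emb v3}"
  shows "mu v = 1/2 \<or>
    (\<exists>L. is_line L \<and> emb v \<in> L \<and> pts_in mu L = 3/2 \<and>
       (\<forall>a\<in>{v1, v2, v3}. \<forall>b\<in>{v1, v2, v3}. a \<noteq> b \<and>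
          emb v \<in> closed_segment (emb a) (emb b) \<longrightarrow>
          L \<noteq> affine hull {emb a, emb b}))"
proof (rule ccontr)
  let ?V = "{v1, v2, v3}"
  assume "\<not> ?thesis"
  then have not_full: "mu v \<noteq> 1/2"
    and sides: "\<And>L. is_line L \<Longrightarrow> emb v \<in> L \<Longrightarrow> pts_in mu L = 3/2 \<Longrightarrow>
      \<exists>a\<in>?V. \<exists>b\<in>?V. a \<noteq> b \<and> L = affine hull {emb a, emb b}"
    by blast+
  have mu: "\<And>u. mu u \<le> 1/2" "supp mu \<subseteq> S"
    using adm by (auto simp: admissible_def)
  have V: "?V \<subseteq> S" "distinct [v1, v2, v3]"
    using pos mu(2) dist by (auto simp: supp_def)
  then have "convex hull {emb v1, emb v2, emb v3} \<subseteq> convex hull (emb ` S)"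
    by (intro hull_mono) auto
  then have v: "v \<in> S"
    using hull carrier by blast
  obtain lam where lamV: "barycentric_weights ?V lam v"
    using barycentric_weights_if_convex_hull[of ?V v] hull by auto
  have lam: "barycentric_weights S lam v" "lam v = 0"
    using barycentric_weights_mono[OF lamV V(1) S] lamV dist
    by (auto simp: barycentric_weights_def supp_def)
  have "(\<Sum>u\<in>{u\<in>S. emb u \<in> L}. lam u) = 1"
    if L: "is_line L" "emb v \<in> L" "(\<Sum>u\<in>{u\<in>S. emb u \<in> L}. mu u) = 3/2" for L
  proof -
    have "pts_in mu L = 3/2"
      using L(3) pts_in_eq_sum[OF S mu(2)] by simp
    then obtain a b where "a \<in> ?V" "b \<in> ?V" "a \<noteq> b" "L = affine hull {emb a, emb b}"
      using sides[OF L(1,2)] by blast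
    then show ?thesis
      using sum_barycentric_weights_on_side[OF S V(1) lamV V(2)] L(2) by blast
  qed
  moreover have "0 < mu u" if "lam u \<noteq> 0" for u
    using lamV that pos by (auto simp: barycentric_weights_def supp_def)
  moreover have "mu v < 1/2"
    using mu(1)[of v] not_full by simp
  ultimately obtain e where "0 < e" "admissible S C (transfer mu e lam v)"
    using transfer_step_admissible[OF S adm lam v] by blast
  then show False
    using min second_moment_transfer_less[OF S lam v] by (meson not_le)
qed

theorem lemma3p2:
  assumes "\<exists>A. counterexample A"
  shows "\<exists>A. counterexample A \<and>
    (\<forall>v1 v2 v3 v. distinct [v1, v2, v3, v] \<and>
        A v1 > 0 \<and> A v2 > 0 \<and> A v3 > 0 \<and>
        \<not> collinear {emb v1, emb v2, emb v3} \<and>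
        emb v \<in> convex hull {emb v1, emb v2, emb v3} \<longrightarrow>
      A v = 1/2 \<or>
      (\<exists>L. is_line L \<and> emb v \<in> L \<and> pts_in A L = 3/2 \<and>
         (\<forall>a\<in>{v1, v2, v3}. \<forall>b\<in>{v1, v2, v3}. a \<noteq> b \<and>
            emb v \<in> closed_segment (emb a) (emb b) \<longrightarrow>
            L \<noteq> affine hull {emb a, emb b})))"
proof -
  obtain A0 where A0: "counterexample A0"
    using assms by blast
  define S where "S = {w. emb w \<in> convex hull (emb ` supp A0)}"
  have S: "finite S"
    using A0 unfolding S_def
    by (intro finite_lattice_points_bounded finite_imp_bounded_convex_hull)
      (simp add: counterexample_def real_seq_def)
  have carrier: "w \<in> S" if "emb w \<in> convex hull (emb ` S)" for w
    using that hull_minimal[of "emb ` S" "convex hull (emb ` supp A0)" convex] by (auto simp: S_def)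
  have "supp A0 \<subseteq> S"
    by (auto simp: S_def hull_inc)
  then obtain mu where mu: "admissible S (Sigma1R A0) mu"
    and min: "\<And>mu'. admissible S (Sigma1R A0) mu' \<Longrightarrow> second_moment S mu \<le> second_moment S mu'"
    using A0 exists_minimal_second_moment[OF S closed_Sigma1R admissible_if_counterexample[OF A0 S]]
    by (auto simp: counterexample_def)
  have "counterexample mu"
    using counterexample_if_admissible[OF mu S] A0 by (simp add: counterexample_def)
  then show ?thesis
    using minimal_second_moment_saturated[OF S carrier mu min] by blast
qed

end
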